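(* Let $N\ge1$ and $n\ge1$, and let $\mathbf A_1,\dots,\mathbf A_N$ be real $n\times n$ matrices with $\|\mathbf A_i\|_\infty\le 1/4$ for all $i$. Suppose that the Gauss differentiation matrix $\mathbf D_{1:N}$ is invertible with $\|\mathbf D_{1:N}^{-1}\|_\infty\le2$. Then for each $\mathbf q\in\mathbb R^n$ and $\mathbf p=(\mathbf p_1,\dots,\mathbf p_N)\in\mathbb R^{nN}$ with $\mathbf p_i\in\mathbb R^n$, the linear system $$\sum_{j=1}^ND_{ij}\mathbf X_j-\mathbf A_i\mathbf X_i=\mathbf p_i\ (1\le i\le N),\qquad \mathbf X_{N+1}-\sum_{j=1}^N\omega_j\mathbf A_j\mathbf X_j=\mathbf q$$ has a unique solution $\mathbf X_j\in\mathbb R^n$, $1\le j\le N+1$, and this solution satisfies $\|\mathbf X_j\|_\infty\le 4\|\mathbf p\|_\infty+\|\mathbf q\|_\infty$ for $1\le j\le N+1$.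
   Context: $-1<\tau_1<\dots<\tau_N<1$ are the $N$ Gauss quadrature abscissas (roots of the degree-$N$ Legendre polynomial), $\omega_1,\dots,\omega_N>0$ the Gauss weights (summing to 2), $\tau_0=-1$. $D_{ij}=\dot L_j(\tau_i)$ for $1\le i\le N$, $0\le j\le N$, where $L_j(\tau)=\prod_{k=0,k\ne j}^N\frac{\tau-\tau_k}{\tau_j-\tau_k}$; $\mathbf D_{1:N}=(D_{ij})_{1\le i,j\le N}$. For a vector, $\|\cdot\|_\infty$ is the maximum absolute entry; for a matrix it is the largest absolute row sum (the induced norm). *)

theory Defs
  imports "HOL-Analysis.Analysis" "HOL-Computational_Algebra.Polynomial"
begin

text \<open>Legendre polynomials via Bonnet's recurrence
  (n+1) P_(n+1) = (2n+1) x P_n - n P_(n-1).\<close>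
fun legendre :: "nat \<Rightarrow> real poly" where
  "legendre 0 = 1"
| "legendre (Suc 0) = [:0, 1:]"
| "legendre (Suc (Suc n)) =
     smult (1 / (real n + 2))
       (smult (2 * real n + 3) ([:0, 1:] * legendre (Suc n)) - smult (real n + 1) (legendre n))"

definition gauss_node :: "nat \<Rightarrow> nat \<Rightarrow> real" where
  "gauss_node N i = (if i = 0 then -1
      else sorted_list_of_set {x. poly (legendre N) x = 0} ! (i - 1))"

definition gauss_weight :: "nat \<Rightarrow> nat \<Rightarrow> real" where
  "gauss_weight N j = integral {-1..1}
     (\<lambda>t. \<Prod>k\<in>{1..N} - {j}. (t - gauss_node N k) / (gauss_node N j - gauss_node N k))"

definition lagrange_basis :: "nat \<Rightarrow> nat \<Rightarrow> real \<Rightarrow> real" where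
  "lagrange_basis N j t = (\<Prod>k\<in>{0..N} - {j}. (t - gauss_node N k) / (gauss_node N j - gauss_node N k))"

definition gauss_diff :: "nat \<Rightarrow> nat \<Rightarrow> nat \<Rightarrow> real" where
  "gauss_diff N i j = deriv (lagrange_basis N j) (gauss_node N i)"

text \<open>Infinity norms. Vectors in R^n are functions on {0..<n}; an m x m matrix indexed by a finite set I.\<close>
definition vec_inf_norm :: "nat \<Rightarrow> (nat \<Rightarrow> real) \<Rightarrow> real" where
  "vec_inf_norm n v = Max ((\<lambda>r. \<bar>v r\<bar>) ` {..<n})"

definition mat_inf_norm :: "nat set \<Rightarrow> (nat \<Rightarrow> nat \<Rightarrow> real) \<Rightarrow> real" where
  "mat_inf_norm I M = Max ((\<lambda>r. \<Sum>c\<in>I. \<bar>M r c\<bar>) ` I)"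

end

theory Submission
  imports Defs
begin

text \<open>
  Since \<open>D\<^sub>1\<^sub>:\<^sub>N\<close> is invertible, the collocation equations are equivalent to the fixed-point
  equation \<open>X = E p + E A X\<close> with \<open>E = D\<^sub>1\<^sub>:\<^sub>N\<inverse>\<close>. Its linear part has infinity norm at most
  \<open>2 \<cdot> 1/4 = 1/2\<close>, so it is a contraction: the fixed point exists, is unique, and satisfies
  \<open>\<parallel>X\<parallel> \<le> \<parallel>E p\<parallel> / (1 - 1/2) \<le> 4 \<parallel>p\<parallel>\<close>. The last equation then defines \<open>X\<^sub>N\<^sub>+\<^sub>1\<close>, and
  \<open>\<parallel>X\<^sub>N\<^sub>+\<^sub>1\<parallel> \<le> \<parallel>q\<parallel> + (\<Sum>|\<omega>\<^sub>j|) \<cdot> 1/4 \<cdot> 4 \<parallel>p\<parallel> = \<parallel>q\<parallel> + 2 \<parallel>p\<parallel>\<close> because the Gauss weights are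
  positive and sum to 2. These two facts about the weights are the real work: they follow from
  exactness of Gauss quadrature for polynomials of degree \<open>< 2N\<close>, which rests on the
  orthogonality of the Legendre polynomials (derived from Legendre's differential equation) and on
  \<open>P\<^sub>N\<close> having \<open>N\<close> distinct real roots.
\<close>

lemma poly_legendre_Suc_Suc:
  "poly (legendre (Suc (Suc n))) x =
     ((2 * real n + 3) * x * poly (legendre (Suc n)) x - (real n + 1) * poly (legendre n) x) / (real n + 2)"
  by (simp add: field_simps)

lemma degree_legendre_le: "degree (legendre n) \<le> n"
proof (induction n rule: legendre.induct)
  case (3 n)
  have "degree ([:0, 1:] * legendre (Suc n)) \<le> Suc (Suc n)"
    using 3 by simp
  moreover have "degree (legendre n) \<le> Suc (Suc n)" using 3 by simp
  ultimately show ?case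
    by (simp only: legendre.simps) (meson degree_diff_le degree_smult_le order_trans)
qed auto

lemma coeff_legendre_pos: "coeff (legendre n) n > 0"
proof (induction n rule: legendre.induct)
  case (3 n)
  have "coeff (legendre n) (Suc (Suc n)) = 0"
    using degree_legendre_le[of n] by (intro coeff_eq_0) simp
  with 3 show ?case by simp
qed auto

lemma degree_legendre: "degree (legendre n) = n"
  using degree_legendre_le coeff_legendre_pos
  by (metis le_antisym le_degree less_irrefl)

lemma legendre_nonzero: "legendre n \<noteq> 0"
  using coeff_legendre_pos[of n] by auto

lemma poly_pderiv_legendre_Suc_Suc:
  "(real n + 2) * poly (pderiv (legendre (Suc (Suc n)))) x =
     (2 * real n + 3) * (poly (legendre (Suc n)) x + x * poly (pderiv (legendre (Suc n))) x)
     - (real n + 1) * poly (pderiv (legendre n)) x"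
proof -
  have "smult (real n + 2) (legendre (Suc (Suc n))) =
      smult (2 * real n + 3) (pCons 0 (legendre (Suc n))) - smult (real n + 1) (legendre n)"
    by simp
  then have "poly (pderiv (smult (real n + 2) (legendre (Suc (Suc n))))) x =
      poly (pderiv (smult (2 * real n + 3) (pCons 0 (legendre (Suc n))) - smult (real n + 1) (legendre n))) x"
    by (simp only:)
  then show ?thesis
    by (simp add: pderiv_smult pderiv_diff pderiv_pCons algebra_simps del: legendre.simps)
qed

lemma legendre_derivative_identities:
  "x * poly (pderiv (legendre (Suc n))) x - poly (pderiv (legendre n)) x
     = (real n + 1) * poly (legendre (Suc n)) x
   \<and> poly (pderiv (legendre (Suc n))) x - x * poly (pderiv (legendre n)) x
     = (real n + 1) * poly (legendre n) x"
proof (induction n)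
  case 0
  then show ?case by (simp add: pderiv_pCons)
next
  case (Suc n)
  define v0 v1 v2 where "v0 = poly (legendre n) x" and "v1 = poly (legendre (Suc n)) x"
    and "v2 = poly (legendre (Suc (Suc n))) x"
  define d0 d1 d2 where "d0 = poly (pderiv (legendre n)) x"
    and "d1 = poly (pderiv (legendre (Suc n))) x" and "d2 = poly (pderiv (legendre (Suc (Suc n)))) x"
  have IH1: "x * d1 - d0 = (real n + 1) * v1" and IH2: "d1 - x * d0 = (real n + 1) * v0"
    using Suc unfolding v0_def v1_def d0_def d1_def by auto
  have rec: "(real n + 2) * v2 = (2 * real n + 3) * x * v1 - (real n + 1) * v0"
    unfolding v0_def v1_def v2_def poly_legendre_Suc_Suc by simp
  have drec: "(real n + 2) * d2 = (2 * real n + 3) * (v1 + x * d1) - (real n + 1) * d0"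
    unfolding d0_def d1_def d2_def v1_def by (rule poly_pderiv_legendre_Suc_Suc)
  have "(real n + 2) * (d2 - x * d1) = (2 * real n + 3) * v1 + (real n + 1) * (x * d1 - d0)"
    using drec by (simp add: algebra_simps)
  also have "\<dots> = (real n + 2) * ((real n + 2) * v1)"
    unfolding IH1 by (simp add: algebra_simps)
  finally have next2: "d2 - x * d1 = (real n + 2) * v1" by simp
  have "(x * x - 1) * d1 = x * (x * d1 - d0) - (d1 - x * d0)"
    by (simp add: algebra_simps)
  then have weighted: "(x * x - 1) * d1 = (real n + 1) * (x * v1 - v0)"
    unfolding IH1 IH2 by (simp add: algebra_simps)
  have "(real n + 2) * (x * d2 - d1) = (real n + 2) * ((x * x - 1) * d1 + (real n + 2) * x * v1)"
    using next2 by (simp add: algebra_simps)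
  also have "\<dots> = (real n + 2) * ((real n + 2) * v2)"
    unfolding weighted rec by (simp add: algebra_simps)
  finally have next1: "x * d2 - d1 = (real n + 2) * v2" by simp
  show ?case
    using next1 next2 unfolding v1_def v2_def d1_def d2_def
    by (simp add: algebra_simps del: legendre.simps)
qed

lemma legendre_ode:
  "pderiv ([:-1, 0, 1:] * pderiv (legendre n)) = smult (real n * (real n + 1)) (legendre n)"
proof (cases n)
  case 0
  then show ?thesis by (simp add: pderiv_pCons)
next
  case (Suc m)
  have weighted: "[:-1, 0, 1:] * pderiv (legendre (Suc m)) =
      smult (real m + 1) (pCons 0 (legendre (Suc m)) - legendre m)"
  proof (rule poly_ext)
    fix x :: real
    have "(x * x - 1) * poly (pderiv (legendre (Suc m))) x =
        x * (x * poly (pderiv (legendre (Suc m))) x - poly (pderiv (legendre m)) x)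
        - (poly (pderiv (legendre (Suc m))) x - x * poly (pderiv (legendre m)) x)"
      by (simp add: algebra_simps)
    then show "poly ([:-1, 0, 1:] * pderiv (legendre (Suc m))) x =
        poly (smult (real m + 1) (pCons 0 (legendre (Suc m)) - legendre m)) x"
      using legendre_derivative_identities[of x m] by (simp add: algebra_simps)
  qed
  show ?thesis
  proof (rule poly_ext)
    fix x :: real
    have "poly (pderiv ([:-1, 0, 1:] * pderiv (legendre n))) x = (real m + 1) * (poly (legendre (Suc m)) x
        + (x * poly (pderiv (legendre (Suc m))) x - poly (pderiv (legendre m)) x))"
      unfolding Suc weighted
      by (simp add: pderiv_smult pderiv_diff pderiv_pCons algebra_simps del: legendre.simps)
    then show "poly (pderiv ([:-1, 0, 1:] * pderiv (legendre n))) x =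
        poly (smult (real n * (real n + 1)) (legendre n)) x"
      using legendre_derivative_identities[of x m] Suc by (simp add: algebra_simps del: legendre.simps)
  qed
qed

definition integral_poly :: "real poly \<Rightarrow> real" where
  "integral_poly p = integral {-1..1} (poly p)"

lemma poly_integrable: "poly p integrable_on {-1..(1::real)}"
  by (intro integrable_continuous_interval continuous_intros)

lemma integral_poly_add: "integral_poly (p + q) = integral_poly p + integral_poly q"
  unfolding integral_poly_def poly_add by (rule integral_add[OF poly_integrable poly_integrable])

lemma integral_poly_smult: "integral_poly (smult c p) = c * integral_poly p"
  unfolding integral_poly_def poly_smult by simp

lemma integral_poly_0: "integral_poly 0 = 0"
  using integral_poly_smult[of 0 0] by simp

lemma integral_poly_sum:
  assumes "finite A"
  shows "integral_poly (\<Sum>a\<in>A. f a) = (\<Sum>a\<in>A. integral_poly (f a))"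
  using assms by (induction A rule: finite_induct) (simp_all add: integral_poly_0 integral_poly_add)

lemma integral_poly_1: "integral_poly 1 = 2"
proof -
  have "poly 1 = (\<lambda>x::real. 1)" by (simp add: fun_eq_iff)
  then show ?thesis by (simp add: integral_poly_def)
qed

lemma integral_poly_pderiv: "integral_poly (pderiv p) = poly p 1 - poly p (-1)"
proof -
  have "(poly (pderiv p) has_integral (poly p 1 - poly p (-1))) {-1..1}"
    by (intro fundamental_theorem_of_calculus)
      (auto intro!: DERIV_subset[OF poly_DERIV] simp: has_real_derivative_iff_has_vector_derivative[symmetric])
  then show ?thesis unfolding integral_poly_def by (rule integral_unique)
qed

lemma integral_poly_nonneg: "(\<And>x. x \<in> {-1..1} \<Longrightarrow> poly p x \<ge> 0) \<Longrightarrow> integral_poly p \<ge> 0"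
  unfolding integral_poly_def by (rule integral_nonneg[OF poly_integrable])

lemma integral_poly_eq_0_imp_zero:
  assumes nonneg: "\<And>x. x \<in> {-1..1} \<Longrightarrow> poly p x \<ge> 0" and zero: "integral_poly p = 0"
  shows "p = 0"
proof -
  have "poly p x = 0" if "x \<in> {-1..1}" for x
    using integral_eq_0_iff[of "-1" 1 "poly p"] nonneg zero that
    by (auto simp: integral_poly_def continuous_on_poly)
  then have "{-1..1::real} \<subseteq> {x. poly p x = 0}" by auto
  moreover have "infinite {-1..1::real}" by simp
  ultimately show "p = 0" using poly_roots_finite[of p] infinite_super by blast
qed

lemma integral_poly_by_parts:
  "integral_poly (pderiv ([:-1, 0, 1:] * q) * r) = - integral_poly ([:-1, 0, 1:] * q * pderiv r)"
proof -
  have "integral_poly (pderiv ([:-1, 0, 1:] * q * r)) = 0"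
    by (simp add: integral_poly_pderiv)
  moreover have "pderiv ([:-1, 0, 1:] * q * r) = pderiv ([:-1, 0, 1:] * q) * r + [:-1, 0, 1:] * q * pderiv r"
    using pderiv_mult[of "[:-1, 0, 1:] * q" r] by (simp only: ac_simps)
  ultimately show ?thesis
    by (simp only: integral_poly_add)
qed

lemma legendre_orthogonal:
  assumes "m \<noteq> n"
  shows "integral_poly (legendre m * legendre n) = 0"
proof -
  have eigen: "real k * (real k + 1) * integral_poly (legendre k * legendre l) =
      - integral_poly ([:-1, 0, 1:] * pderiv (legendre k) * pderiv (legendre l))" for k l
    using integral_poly_by_parts[of "pderiv (legendre k)" "legendre l"]
    by (simp only: legendre_ode mult_smult_left integral_poly_smult)
  have mono: "k < l \<Longrightarrow> k * (k + 1) < l * (l + 1)" for k l :: nat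
    by (intro mult_strict_mono) auto
  have "m * (m + 1) \<noteq> n * (n + 1)"
    using assms mono by (metis neq_iff order_less_irrefl)
  then have "real m * (real m + 1) \<noteq> real n * (real n + 1)"
    by (metis of_nat_1 of_nat_add of_nat_eq_iff of_nat_mult)
  moreover have "real m * (real m + 1) * integral_poly (legendre m * legendre n) =
      real n * (real n + 1) * integral_poly (legendre m * legendre n)"
    using eigen[of m n] eigen[of n m] by (simp only: ac_simps)
  ultimately show ?thesis by simp
qed

lemma legendre_orthogonal_low_degree:
  "degree q < n \<Longrightarrow> integral_poly (legendre n * q) = 0"
proof (induction "degree q" arbitrary: q rule: less_induct)
  case less
  define d where "d = degree q"
  define q' where "q' = q - smult (coeff q d / coeff (legendre d) d) (legendre d)"
  have "degree q' \<le> d"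
    unfolding q'_def d_def
    by (metis degree_diff_le degree_legendre degree_smult_le order_refl)
  moreover have "coeff q' d = 0"
    unfolding q'_def using coeff_legendre_pos[of d] by simp
  ultimately have "q' = 0 \<or> degree q' < d"
    by (metis leading_coeff_0_iff le_neq_implies_less)
  then have "integral_poly (legendre n * q') = 0"
    using less d_def by (auto simp: integral_poly_0)
  moreover have "integral_poly (legendre n * legendre d) = 0"
    using less d_def by (intro legendre_orthogonal) simp
  moreover have "legendre n * q =
      legendre n * q' + smult (coeff q d / coeff (legendre d) d) (legendre n * legendre d)"
    unfolding q'_def by (simp add: algebra_simps)
  ultimately show ?case
    by (simp add: integral_poly_add integral_poly_smult)
qed

lemma poly_factor_roots:
  fixes p :: "real poly"
  assumes "finite Z" and "p \<noteq> 0"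
  shows "\<exists>r. p = (\<Prod>z\<in>Z. [:-z, 1:] ^ order z p) * r \<and> (\<forall>z\<in>Z. poly r z \<noteq> 0)"
  using assms(1)
proof (induction Z rule: finite_induct)
  case (insert a Z)
  define f where "f = (\<Prod>z\<in>Z. [:-z, 1:] ^ order z p)"
  obtain r where r: "p = f * r" and r_Z: "\<forall>z\<in>Z. poly r z \<noteq> 0"
    using insert.IH unfolding f_def by blast
  have "r \<noteq> 0" using r assms(2) by auto
  then obtain r' where r': "r = [:-a, 1:] ^ order a r * r'" and "\<not> [:-a, 1:] dvd r'"
    using order_decomp by blast
  then have "poly r' a \<noteq> 0" by (simp add: poly_eq_0_iff_dvd)
  moreover have "\<forall>z\<in>Z. poly r' z \<noteq> 0" using r_Z r' by (metis mult_zero_right poly_mult)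
  moreover have "order a p = order a r"
  proof -
    have "poly f a \<noteq> 0"
      unfolding f_def using insert(1,2) by (auto simp: poly_prod)
    then have "order a f = 0" by (simp add: order_root)
    moreover have "f * r \<noteq> 0" using r assms(2) by simp
    ultimately show ?thesis using arg_cong[OF r, of "order a"] by (simp add: order_mult)
  qed
  then have "p = ([:-a, 1:] ^ order a p * f) * r'"
    using r r' by (simp only: ac_simps)
  then have "p = (\<Prod>z\<in>insert a Z. [:-z, 1:] ^ order z p) * r'"
    unfolding f_def by (subst prod.insert[OF insert(1,2)])
  ultimately show ?case by blast
qed simp

lemma poly_same_sign_without_roots:
  fixes r :: "real poly"
  assumes no_root: "\<forall>x\<in>{a..b}. poly r x \<noteq> 0" and "x \<in> {a..b}" and "y \<in> {a..b}"
  shows "poly r x * poly r y > 0"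
proof (rule ccontr)
  assume "\<not> poly r x * poly r y > 0"
  moreover have "poly r x * poly r y \<noteq> 0" using no_root assms(2,3) by simp
  ultimately have neg: "poly r x * poly r y < 0" by linarith
  then have "x \<noteq> y" by (metis not_square_less_zero)
  have "\<exists>z\<in>{a..b}. poly r z = 0"
  proof (cases "x < y")
    case True
    then show ?thesis using poly_IVT[OF True neg] assms(2,3) by fastforce
  next
    case False
    with \<open>x \<noteq> y\<close> have "y < x" by simp
    then show ?thesis using poly_IVT[OF \<open>y < x\<close>] neg assms(2,3) by (fastforce simp: mult.commute)
  qed
  then show False using no_root by blast
qed

lemma poly_nonneg_multiple:
  fixes p :: "real poly"
  assumes "p \<noteq> 0" and "a \<le> b"
  obtains s where "s \<noteq> 0" and "degree s \<le> card ({x. poly p x = 0} \<inter> {a..b})"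
    and "\<forall>x\<in>{a..b}. poly (p * s) x \<ge> 0"
proof -
  define Z where "Z = {x. poly p x = 0} \<inter> {a..b}"
  have "finite Z" unfolding Z_def using poly_roots_finite[OF \<open>p \<noteq> 0\<close>] by simp
  then obtain r where p_eq: "p = (\<Prod>z\<in>Z. [:-z, 1:] ^ order z p) * r" and r_Z: "\<forall>z\<in>Z. poly r z \<noteq> 0"
    using poly_factor_roots \<open>p \<noteq> 0\<close> by blast
  have r_no_root: "\<forall>x\<in>{a..b}. poly r x \<noteq> 0"
  proof (intro ballI notI)
    fix x :: real
    assume "x \<in> {a..b}" and "poly r x = 0"
    moreover from \<open>poly r x = 0\<close> have "poly p x = 0" by (subst p_eq) simp
    ultimately have "x \<in> Z" unfolding Z_def by simp
    with r_Z \<open>poly r x = 0\<close> show False by blast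
  qed
  \<comment> \<open>the factor raises every root of \<open>p\<close> in \<open>[a, b]\<close> to even order and fixes the sign of \<open>r\<close>\<close>
  define s where "s = smult (poly r a) (\<Prod>z\<in>Z. [:-z, 1:] ^ (order z p mod 2))"
  show thesis
  proof
    show "s \<noteq> 0" unfolding s_def using \<open>finite Z\<close> r_no_root \<open>a \<le> b\<close> by simp
    have "degree s \<le> (\<Sum>z\<in>Z. order z p mod 2)"
      unfolding s_def
      by (rule order_trans[OF degree_smult_le order_trans[OF degree_prod_sum_le[OF \<open>finite Z\<close>]]])
        (simp add: degree_linear_power)
    also have "\<dots> \<le> card Z" by (rule order_trans[OF sum_mono[of Z _ "\<lambda>_. 1"]]) auto
    finally show "degree s \<le> card ({x. poly p x = 0} \<inter> {a..b})" unfolding Z_def .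
    show "\<forall>x\<in>{a..b}. poly (p * s) x \<ge> 0"
    proof
      fix x assume "x \<in> {a..b}"
      have eq: "poly (p * s) x = (poly r x * poly r a) * (\<Prod>z\<in>Z. (x - z) ^ (order z p + order z p mod 2))"
        by (subst p_eq) (simp add: s_def poly_prod power_add prod.distrib mult_ac)
      have even: "(\<Prod>z\<in>Z. (x - z) ^ (order z p + order z p mod 2)) \<ge> 0"
        by (intro prod_nonneg) (auto intro!: zero_le_even_power)
      have same_sign: "poly r x * poly r a > 0"
        using poly_same_sign_without_roots[OF r_no_root] \<open>x \<in> {a..b}\<close> \<open>a \<le> b\<close> by simp
      show "poly (p * s) x \<ge> 0"
        by (simp only: eq) (rule mult_nonneg_nonneg[OF less_imp_le[OF same_sign] even])
    qed
  qed
qed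

lemma card_roots_ge_if_orthogonal:
  fixes p :: "real poly"
  assumes "p \<noteq> 0" and orth: "\<And>q. degree q < k \<Longrightarrow> integral_poly (p * q) = 0"
  shows "k \<le> card {x. poly p x = 0}"
proof (rule ccontr)
  assume "\<not> k \<le> card {x. poly p x = 0}"
  obtain s where "s \<noteq> 0" and deg_s: "degree s \<le> card ({x. poly p x = 0} \<inter> {-1..1})"
    and nonneg: "\<forall>x\<in>{-1..1}. poly (p * s) x \<ge> 0"
    using poly_nonneg_multiple[OF \<open>p \<noteq> 0\<close>, of "-1" 1] by auto
  have "card ({x. poly p x = 0} \<inter> {-1..1}) \<le> card {x. poly p x = 0}"
    using poly_roots_finite[OF \<open>p \<noteq> 0\<close>] by (intro card_mono) auto
  with deg_s \<open>\<not> k \<le> card {x. poly p x = 0}\<close> have "integral_poly (p * s) = 0"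
    by (intro orth) simp
  with nonneg have "p * s = 0" by (intro integral_poly_eq_0_imp_zero) auto
  with \<open>p \<noteq> 0\<close> \<open>s \<noteq> 0\<close> show False by simp
qed

lemma card_legendre_roots: "card {x. poly (legendre n) x = 0} = n"
proof (rule antisym)
  show "card {x. poly (legendre n) x = 0} \<le> n"
    using card_poly_roots_bound[OF legendre_nonzero] by (simp add: degree_legendre)
  show "n \<le> card {x. poly (legendre n) x = 0}"
    by (rule card_roots_ge_if_orthogonal[OF legendre_nonzero legendre_orthogonal_low_degree])
qed

definition gauss_lagrange :: "nat \<Rightarrow> nat \<Rightarrow> real poly" where
  "gauss_lagrange N j =
     (\<Prod>k\<in>{1..N} - {j}. smult (1 / (gauss_node N j - gauss_node N k)) [:- gauss_node N k, 1:])"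

lemma gauss_node_nth:
  assumes "i \<in> {1..N}"
  shows "gauss_node N i = sorted_list_of_set {x. poly (legendre N) x = 0} ! (i - 1)"
    and "i - 1 < length (sorted_list_of_set {x. poly (legendre N) x = 0})"
  using assms card_legendre_roots[of N] by (auto simp: gauss_node_def)

lemma gauss_node_root:
  assumes "i \<in> {1..N}"
  shows "poly (legendre N) (gauss_node N i) = 0"
proof -
  have "gauss_node N i \<in> set (sorted_list_of_set {x. poly (legendre N) x = 0})"
    using gauss_node_nth[OF assms] by simp
  then show ?thesis using poly_roots_finite[OF legendre_nonzero, of N] by simp
qed

lemma inj_on_gauss_node: "inj_on (gauss_node N) {1..N}"
proof (rule inj_onI)
  fix i k assume "i \<in> {1..N}" "k \<in> {1..N}" "gauss_node N i = gauss_node N k"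
  then have "i - 1 = k - 1"
    using gauss_node_nth[of i N] gauss_node_nth[of k N]
    by (simp add: nth_eq_iff_index_eq[OF distinct_sorted_list_of_set])
  with \<open>i \<in> {1..N}\<close> \<open>k \<in> {1..N}\<close> show "i = k" by simp linarith
qed

lemma poly_gauss_lagrange:
  "poly (gauss_lagrange N j) t =
     (\<Prod>k\<in>{1..N} - {j}. (t - gauss_node N k) / (gauss_node N j - gauss_node N k))"
  unfolding gauss_lagrange_def poly_prod by (intro prod.cong) (simp_all add: divide_inverse algebra_simps)

lemma gauss_weight_eq: "gauss_weight N j = integral_poly (gauss_lagrange N j)"
  unfolding gauss_weight_def integral_poly_def poly_gauss_lagrange ..

lemma degree_gauss_lagrange:
  assumes "j \<in> {1..N}"
  shows "degree (gauss_lagrange N j) < N"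
proof -
  have "degree (gauss_lagrange N j) \<le>
      (\<Sum>k\<in>{1..N} - {j}. degree (smult (1 / (gauss_node N j - gauss_node N k)) [:- gauss_node N k, 1:]))"
    unfolding gauss_lagrange_def by (rule order_trans[OF degree_prod_sum_le]) (simp_all add: o_def)
  also have "\<dots> \<le> (\<Sum>k\<in>{1..N} - {j}. 1)"
    by (intro sum_mono order_trans[OF degree_smult_le]) simp
  finally show ?thesis using assms by simp linarith
qed

lemma poly_gauss_lagrange_node:
  assumes "i \<in> {1..N}" and "j \<in> {1..N}"
  shows "poly (gauss_lagrange N j) (gauss_node N i) = (if i = j then 1 else 0)"
proof (cases "i = j")
  case True
  have "gauss_node N j \<noteq> gauss_node N k" if "k \<in> {1..N} - {j}" for k
    using inj_on_gauss_node[of N] assms(2) that by (auto dest: inj_onD)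
  then show ?thesis using True by (simp add: poly_gauss_lagrange)
next
  case False
  then have "poly (gauss_lagrange N j) (gauss_node N i) = 0"
    unfolding poly_gauss_lagrange by (intro prod_zero) (use assms in auto)
  with False show ?thesis by simp
qed

lemma gauss_interpolation:
  assumes "degree f < N"
  shows "f = (\<Sum>j\<in>{1..N}. smult (poly f (gauss_node N j)) (gauss_lagrange N j))"
proof (rule poly_eqI_degree[of "gauss_node N ` {1..N}"])
  show "poly f x = poly (\<Sum>j\<in>{1..N}. smult (poly f (gauss_node N j)) (gauss_lagrange N j)) x"
    if node: "x \<in> gauss_node N ` {1..N}" for x
  proof -
    obtain i where i: "i \<in> {1..N}" and x: "x = gauss_node N i" using node by blast
    have "poly (\<Sum>j\<in>{1..N}. smult (poly f (gauss_node N j)) (gauss_lagrange N j)) x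
        = (\<Sum>j\<in>{1..N}. if i = j then poly f (gauss_node N j) else 0)"
      unfolding poly_sum x by (intro sum.cong refl) (simp add: poly_gauss_lagrange_node[OF i])
    also have "\<dots> = poly f x" using i x by simp
    finally show ?thesis ..
  qed
  show "degree f < card (gauss_node N ` {1..N})"
    using assms card_image[OF inj_on_gauss_node, of N] by simp
  have "degree (\<Sum>j\<in>{1..N}. smult (poly f (gauss_node N j)) (gauss_lagrange N j)) < N"
    using assms
    by (intro degree_sum_less) (auto intro: le_less_trans[OF degree_smult_le] degree_gauss_lagrange)
  then show "degree (\<Sum>j\<in>{1..N}. smult (poly f (gauss_node N j)) (gauss_lagrange N j))
      < card (gauss_node N ` {1..N})"
    using card_image[OF inj_on_gauss_node, of N] by simp
qed

lemma gauss_quadrature_exact: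
  assumes "degree f < 2 * N"
  shows "integral_poly f = (\<Sum>j\<in>{1..N}. gauss_weight N j * poly f (gauss_node N j))"
proof -
  \<comment> \<open>the quotient by \<open>P\<^sub>N\<close> is orthogonal to \<open>P\<^sub>N\<close>; the remainder agrees with \<open>f\<close> at the nodes\<close>
  define g r where "g = f div legendre N" and "r = f mod legendre N"
  have f_eq: "f = g * legendre N + r" unfolding g_def r_def by simp
  have "N > 0" using assms by simp
  have deg_r: "degree r < N"
    using degree_mod_less[OF legendre_nonzero, of f N] \<open>N > 0\<close>
    by (auto simp: r_def degree_legendre)
  have "degree g < N"
  proof (cases "g = 0")
    case False
    then have deg_gP: "degree (g * legendre N) = degree g + N"
      by (simp add: degree_mult_eq legendre_nonzero degree_legendre)
    then have "degree f = degree (g * legendre N)"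
      using deg_r unfolding f_eq by (intro degree_add_eq_left) simp
    with assms deg_gP show ?thesis by simp
  qed (use \<open>N > 0\<close> in simp)
  then have "integral_poly (g * legendre N) = 0"
    using legendre_orthogonal_low_degree by (simp add: mult.commute)
  then have "integral_poly f = integral_poly r"
    unfolding f_eq by (simp add: integral_poly_add)
  also have "\<dots> = (\<Sum>j\<in>{1..N}. gauss_weight N j * poly r (gauss_node N j))"
    by (subst gauss_interpolation[OF deg_r])
      (simp add: integral_poly_sum integral_poly_smult gauss_weight_eq mult.commute)
  also have "\<dots> = (\<Sum>j\<in>{1..N}. gauss_weight N j * poly f (gauss_node N j))"
    by (intro sum.cong refl) (simp add: f_eq gauss_node_root)
  finally show ?thesis .
qed

lemma gauss_weight_nonneg:
  assumes "j \<in> {1..N}"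
  shows "gauss_weight N j \<ge> 0"
proof -
  have "degree (gauss_lagrange N j ^ 2) < 2 * N"
    using degree_gauss_lagrange[OF assms] degree_power_le[of "gauss_lagrange N j" 2] by linarith
  then have "integral_poly (gauss_lagrange N j ^ 2) =
      (\<Sum>k\<in>{1..N}. gauss_weight N k * poly (gauss_lagrange N j) (gauss_node N k) ^ 2)"
    by (simp add: gauss_quadrature_exact)
  also have "\<dots> = (\<Sum>k\<in>{1..N}. if k = j then gauss_weight N k else 0)"
    by (intro sum.cong refl) (simp add: poly_gauss_lagrange_node[OF _ assms])
  also have "\<dots> = gauss_weight N j"
    using assms by simp
  finally show ?thesis
    by (metis integral_poly_nonneg poly_power zero_le_power2)
qed

lemma sum_gauss_weight:
  assumes "N \<ge> 1"
  shows "(\<Sum>j\<in>{1..N}. gauss_weight N j) = 2"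
  using gauss_quadrature_exact[of 1 N] assms by (simp add: integral_poly_1)

lemma abs_sum_mult_le:
  fixes e v :: "'a \<Rightarrow> real"
  assumes "\<forall>k\<in>I. \<bar>v k\<bar> \<le> V"
  shows "\<bar>\<Sum>k\<in>I. e k * v k\<bar> \<le> (\<Sum>k\<in>I. \<bar>e k\<bar>) * V"
proof -
  have "\<bar>\<Sum>k\<in>I. e k * v k\<bar> \<le> (\<Sum>k\<in>I. \<bar>e k\<bar> * \<bar>v k\<bar>)"
    using sum_abs[of "\<lambda>k. e k * v k" I] by (simp add: abs_mult)
  also have "\<dots> \<le> (\<Sum>k\<in>I. \<bar>e k\<bar> * V)"
    using assms by (intro sum_mono mult_left_mono) auto
  finally show ?thesis by (simp add: sum_distrib_right)
qed

definition affine_step :: "'a set \<Rightarrow> ('a \<Rightarrow> 'a \<Rightarrow> real) \<Rightarrow> ('a \<Rightarrow> real) \<Rightarrow> ('a \<Rightarrow> real) \<Rightarrow> 'a \<Rightarrow> real"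
  where "affine_step S K b y s = b s + (\<Sum>t\<in>S. K s t * y t)"

lemma affine_fixpoint_bound:
  assumes "finite S" and rows: "\<forall>s\<in>S. (\<Sum>t\<in>S. \<bar>K s t\<bar>) \<le> c" and "c < 1"
    and fixpoint: "\<forall>s\<in>S. y s = affine_step S K b y s" and b: "\<forall>s\<in>S. \<bar>b s\<bar> \<le> B"
  shows "\<forall>s\<in>S. \<bar>y s\<bar> \<le> B / (1 - c)"
proof (cases "S = {}")
  case False
  define M where "M = Max ((\<lambda>s. \<bar>y s\<bar>) ` S)"
  have y_le: "\<bar>y s\<bar> \<le> M" if "s \<in> S" for s
    unfolding M_def using \<open>finite S\<close> that by simp
  have "M \<in> (\<lambda>s. \<bar>y s\<bar>) ` S"
    unfolding M_def using \<open>finite S\<close> False by (intro Max_in) auto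
  then obtain s where "s \<in> S" and M: "M = \<bar>y s\<bar>" by blast
  have y_s: "y s = b s + (\<Sum>t\<in>S. K s t * y t)"
    using fixpoint \<open>s \<in> S\<close> unfolding affine_step_def by blast
  have "M \<le> \<bar>b s\<bar> + \<bar>\<Sum>t\<in>S. K s t * y t\<bar>"
    unfolding M by (subst y_s) (rule abs_triangle_ineq)
  also have "\<dots> \<le> B + (\<Sum>t\<in>S. \<bar>K s t\<bar>) * M"
    using b \<open>s \<in> S\<close> y_le by (intro add_mono abs_sum_mult_le) auto
  also have "\<dots> \<le> B + c * M"
    using rows \<open>s \<in> S\<close> M by (intro add_left_mono mult_right_mono) auto
  finally have "M \<le> B / (1 - c)"
    using \<open>c < 1\<close> by (simp add: field_simps)
  with y_le show ?thesis by (blast intro: order_trans)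
qed simp

lemma affine_fixpoint_unique:
  assumes "finite S" and rows: "\<forall>s\<in>S. (\<Sum>t\<in>S. \<bar>K s t\<bar>) \<le> c" and "c < 1"
    and "\<forall>s\<in>S. y s = affine_step S K b y s" and "\<forall>s\<in>S. z s = affine_step S K b z s"
  shows "\<forall>s\<in>S. y s = z s"
proof -
  have "\<forall>s\<in>S. y s - z s = affine_step S K (\<lambda>_. 0) (\<lambda>t. y t - z t) s"
  proof
    fix s assume "s \<in> S"
    then have "y s - z s = affine_step S K b y s - affine_step S K b z s"
      using assms(4,5) by simp
    also have "\<dots> = affine_step S K (\<lambda>_. 0) (\<lambda>t. y t - z t) s"
      by (simp add: affine_step_def algebra_simps sum_subtractf)
    finally show "y s - z s = affine_step S K (\<lambda>_. 0) (\<lambda>t. y t - z t) s" .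
  qed
  then have "\<forall>s\<in>S. \<bar>y s - z s\<bar> \<le> 0 / (1 - c)"
    by (rule affine_fixpoint_bound[OF \<open>finite S\<close> rows \<open>c < 1\<close>]) simp
  then show ?thesis by simp
qed

lemma affine_step_contraction:
  assumes rows: "\<forall>s\<in>S. (\<Sum>t\<in>S. \<bar>K s t\<bar>) \<le> c" and "0 \<le> \<delta>"
    and close: "\<forall>t\<in>S. \<bar>y t - z t\<bar> \<le> \<delta>"
  shows "\<forall>s\<in>S. \<bar>affine_step S K b y s - affine_step S K b z s\<bar> \<le> c * \<delta>"
proof
  fix s assume "s \<in> S"
  have "\<bar>affine_step S K b y s - affine_step S K b z s\<bar> = \<bar>\<Sum>t\<in>S. K s t * (y t - z t)\<bar>"
    by (simp add: affine_step_def algebra_simps sum_subtractf)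
  also have "\<dots> \<le> (\<Sum>t\<in>S. \<bar>K s t\<bar>) * \<delta>"
    using close by (rule abs_sum_mult_le)
  also have "\<dots> \<le> c * \<delta>"
    using rows \<open>s \<in> S\<close> \<open>0 \<le> \<delta>\<close> by (intro mult_right_mono) auto
  finally show "\<bar>affine_step S K b y s - affine_step S K b z s\<bar> \<le> c * \<delta>" .
qed

lemma affine_iterate_step_le:
  assumes rows: "\<forall>s\<in>S. (\<Sum>t\<in>S. \<bar>K s t\<bar>) \<le> c" and "0 \<le> c"
    and init: "\<forall>s\<in>S. \<bar>affine_step S K b y s - y s\<bar> \<le> B" and "0 \<le> B"
  shows "\<forall>s\<in>S. \<bar>(affine_step S K b ^^ Suc m) y s - (affine_step S K b ^^ m) y s\<bar> \<le> c ^ m * B"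
proof (induction m)
  case (Suc m)
  have "0 \<le> c ^ m * B" using \<open>0 \<le> c\<close> \<open>0 \<le> B\<close> by simp
  from affine_step_contraction[OF rows this Suc.IH]
  show ?case by (simp add: mult.assoc)
qed (use init in simp)

lemma affine_fixpoint_exists:
  assumes "finite S" and rows: "\<forall>s\<in>S. (\<Sum>t\<in>S. \<bar>K s t\<bar>) \<le> c" and "c < 1"
  shows "\<exists>y. \<forall>s\<in>S. y s = affine_step S K b y s"
proof (cases "S = {}")
  case False
  then obtain s where "s \<in> S" by blast
  moreover have "0 \<le> (\<Sum>t\<in>S. \<bar>K s t\<bar>)" by (simp add: sum_nonneg)
  ultimately have "0 \<le> c" using rows by (blast intro: order_trans)
  define it where "it m = (affine_step S K b ^^ m) (\<lambda>_. 0)" for m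
  define B where "B = (\<Sum>s\<in>S. \<bar>b s\<bar>)"
  have "\<forall>s\<in>S. \<bar>affine_step S K b (\<lambda>_. 0) s - 0\<bar> \<le> B"
    unfolding B_def affine_step_def using \<open>finite S\<close> by (auto intro!: member_le_sum)
  from affine_iterate_step_le[OF rows \<open>0 \<le> c\<close> this]
  have diff: "\<forall>s\<in>S. \<bar>it (Suc m) s - it m s\<bar> \<le> c ^ m * B" for m
    unfolding it_def B_def by (simp add: sum_nonneg)
  have step: "it (Suc m) = affine_step S K b (it m)" for m
    unfolding it_def by simp
  define y where "y s = (\<Sum>m. it (Suc m) s - it m s)" for s
  have conv: "(\<lambda>m. it m s) \<longlonglongrightarrow> y s" if "s \<in> S" for s
  proof -
    have "summable (\<lambda>m. c ^ m * B)"
      using \<open>0 \<le> c\<close> \<open>c < 1\<close> by (intro summable_mult2 summable_geometric) simp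
    then have "summable (\<lambda>m. it (Suc m) s - it m s)"
      by (rule summable_comparison_test') (use diff that in simp)
    then have "(\<lambda>m. \<Sum>i<m. it (Suc i) s - it i s) \<longlonglongrightarrow> y s"
      unfolding y_def by (rule summable_LIMSEQ)
    moreover have "(\<Sum>i<m. it (Suc i) s - it i s) = it m s" for m
      using sum_lessThan_telescope[of "\<lambda>i. it i s" m] by (simp add: it_def)
    ultimately show ?thesis by simp
  qed
  have "y s = affine_step S K b y s" if "s \<in> S" for s
  proof (rule LIMSEQ_unique)
    show "(\<lambda>m. it (Suc m) s) \<longlonglongrightarrow> y s" using conv[OF that] by (rule LIMSEQ_Suc)
    show "(\<lambda>m. it (Suc m) s) \<longlonglongrightarrow> affine_step S K b y s"
      unfolding step affine_step_def using conv by (intro tendsto_add tendsto_const tendsto_sum tendsto_mult_left)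
  qed
  then show ?thesis by blast
qed simp

lemma left_inverse_solve:
  fixes M M' :: "'a \<Rightarrow> 'a \<Rightarrow> real"
  assumes "finite I" and inverse: "\<forall>i\<in>I. \<forall>j\<in>I. (\<Sum>k\<in>I. M i k * M' k j) = (if i = j then 1 else 0)"
    and solves: "\<forall>i\<in>I. (\<Sum>j\<in>I. M' i j * x j) = y i"
  shows "\<forall>i\<in>I. x i = (\<Sum>j\<in>I. M i j * y j)"
proof
  fix i assume "i \<in> I"
  have "(\<Sum>j\<in>I. M i j * y j) = (\<Sum>j\<in>I. M i j * (\<Sum>l\<in>I. M' j l * x l))"
    using solves by simp
  also have "\<dots> = (\<Sum>l\<in>I. (\<Sum>j\<in>I. M i j * M' j l) * x l)"
    by (simp add: sum_distrib_left sum_distrib_right mult.assoc) (rule sum.swap)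
  also have "\<dots> = (\<Sum>l\<in>I. if i = l then x l else 0)"
    using inverse \<open>i \<in> I\<close> by (intro sum.cong) auto
  also have "\<dots> = x i" using \<open>finite I\<close> \<open>i \<in> I\<close> by simp
  finally show "x i = (\<Sum>j\<in>I. M i j * y j)" ..
qed

lemma inverse_solve_iff:
  fixes D E :: "'a \<Rightarrow> 'a \<Rightarrow> real"
  assumes "finite I"
    and inverse: "\<forall>i\<in>I. \<forall>j\<in>I. (\<Sum>k\<in>I. D i k * E k j) = (if i = j then 1 else 0)
                    \<and> (\<Sum>k\<in>I. E i k * D k j) = (if i = j then 1 else 0)"
  shows "(\<forall>i\<in>I. (\<Sum>j\<in>I. D i j * x j) = y i) \<longleftrightarrow> (\<forall>i\<in>I. x i = (\<Sum>j\<in>I. E i j * y j))"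
proof
  show "\<forall>i\<in>I. x i = (\<Sum>j\<in>I. E i j * y j)" if "\<forall>i\<in>I. (\<Sum>j\<in>I. D i j * x j) = y i"
    using left_inverse_solve[OF \<open>finite I\<close> _ that] inverse by blast
  show "\<forall>i\<in>I. (\<Sum>j\<in>I. D i j * x j) = y i" if "\<forall>i\<in>I. x i = (\<Sum>j\<in>I. E i j * y j)"
    using left_inverse_solve[of I D E y x] \<open>finite I\<close> inverse that by auto
qed

definition collocation_eqs ::
  "'i set \<Rightarrow> nat \<Rightarrow> ('i \<Rightarrow> 'i \<Rightarrow> real) \<Rightarrow> ('i \<Rightarrow> nat \<Rightarrow> nat \<Rightarrow> real) \<Rightarrow> ('i \<Rightarrow> nat \<Rightarrow> real)
     \<Rightarrow> ('i \<Rightarrow> nat \<Rightarrow> real) \<Rightarrow> bool" where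
  "collocation_eqs I n D A p X \<longleftrightarrow>
     (\<forall>i\<in>I. \<forall>r<n. (\<Sum>j\<in>I. D i j * X j r) - (\<Sum>c<n. A i r c * X i c) = p i r)"

lemma collocation_eqs_iff_fixpoint:
  assumes "finite I"
    and inverse: "\<forall>i\<in>I. \<forall>j\<in>I. (\<Sum>k\<in>I. D i k * E k j) = (if i = j then 1 else 0)
                    \<and> (\<Sum>k\<in>I. E i k * D k j) = (if i = j then 1 else 0)"
  shows "collocation_eqs I n D A p X \<longleftrightarrow>
    (\<forall>s\<in>I \<times> {..<n}. case_prod X s =
       affine_step (I \<times> {..<n}) (\<lambda>(j, r) (k, c). E j k * A k r c) (\<lambda>(j, r). \<Sum>k\<in>I. E j k * p k r)
         (case_prod X) s)"
proof -
  have "collocation_eqs I n D A p X \<longleftrightarrow>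
      (\<forall>r<n. \<forall>i\<in>I. (\<Sum>j\<in>I. D i j * X j r) = p i r + (\<Sum>c<n. A i r c * X i c))"
    unfolding collocation_eqs_def by (auto simp: algebra_simps)
  also have "\<dots> \<longleftrightarrow> (\<forall>r<n. \<forall>j\<in>I. X j r = (\<Sum>k\<in>I. E j k * (p k r + (\<Sum>c<n. A k r c * X k c))))"
    using inverse_solve_iff[OF assms] by simp
  also have "\<dots> \<longleftrightarrow> (\<forall>s\<in>I \<times> {..<n}. case_prod X s =
       affine_step (I \<times> {..<n}) (\<lambda>(j, r) (k, c). E j k * A k r c) (\<lambda>(j, r). \<Sum>k\<in>I. E j k * p k r)
         (case_prod X) s)"
  proof -
    have "(\<Sum>k\<in>I. E j k * (p k r + (\<Sum>c<n. A k r c * X k c))) =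
        affine_step (I \<times> {..<n}) (\<lambda>(j, r) (k, c). E j k * A k r c) (\<lambda>(j, r). \<Sum>k\<in>I. E j k * p k r)
          (case_prod X) (j, r)" for j r
      by (simp add: affine_step_def sum.cartesian_product' distrib_left sum.distrib sum_distrib_left mult.assoc)
    then show ?thesis by auto
  qed
  finally show ?thesis .
qed

lemma collocation_system_solution:
  fixes D E :: "'i \<Rightarrow> 'i \<Rightarrow> real" and A :: "'i \<Rightarrow> nat \<Rightarrow> nat \<Rightarrow> real"
  assumes "finite I"
    and inverse: "\<forall>i\<in>I. \<forall>j\<in>I. (\<Sum>k\<in>I. D i k * E k j) = (if i = j then 1 else 0)
                    \<and> (\<Sum>k\<in>I. E i k * D k j) = (if i = j then 1 else 0)"
    and E_rows: "\<forall>i\<in>I. (\<Sum>k\<in>I. \<bar>E i k\<bar>) \<le> e"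
    and A_rows: "\<forall>i\<in>I. \<forall>r<n. (\<Sum>c<n. \<bar>A i r c\<bar>) \<le> \<alpha>" and "0 \<le> \<alpha>" and "e * \<alpha> < 1"
    and p_bound: "\<forall>i\<in>I. \<forall>r<n. \<bar>p i r\<bar> \<le> B"
  shows "\<exists>X. collocation_eqs I n D A p X
    \<and> (\<forall>Y. collocation_eqs I n D A p Y \<longrightarrow> (\<forall>j\<in>I. \<forall>r<n. Y j r = X j r))
    \<and> (\<forall>j\<in>I. \<forall>r<n. \<bar>X j r\<bar> \<le> e * B / (1 - e * \<alpha>))"
proof -
  define S K b where "S = I \<times> {..<n}" and "K = (\<lambda>(j, r) (k, c). E j k * A k r c)"
    and "b = (\<lambda>(j, r). \<Sum>k\<in>I. E j k * p k r)"
  have "finite S" unfolding S_def using \<open>finite I\<close> by simp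
  have fixpoint_iff: "collocation_eqs I n D A p Y \<longleftrightarrow> (\<forall>s\<in>S. case_prod Y s = affine_step S K b (case_prod Y) s)"
    for Y unfolding S_def K_def b_def by (rule collocation_eqs_iff_fixpoint[OF \<open>finite I\<close> inverse])
  have rows: "\<forall>s\<in>S. (\<Sum>t\<in>S. \<bar>K s t\<bar>) \<le> e * \<alpha>"
  proof (clarsimp simp: S_def)
    fix j r assume "j \<in> I" "r < n"
    have "(\<Sum>t\<in>I \<times> {..<n}. \<bar>K (j, r) t\<bar>) = (\<Sum>k\<in>I. \<bar>E j k\<bar> * (\<Sum>c<n. \<bar>A k r c\<bar>))"
      by (simp add: K_def sum.cartesian_product' abs_mult sum_distrib_left)
    also have "\<dots> \<le> (\<Sum>k\<in>I. \<bar>E j k\<bar> * \<alpha>)"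
      using A_rows \<open>r < n\<close> by (intro sum_mono mult_left_mono) auto
    also have "\<dots> \<le> e * \<alpha>"
      using E_rows \<open>j \<in> I\<close> \<open>0 \<le> \<alpha>\<close> by (simp add: sum_distrib_right[symmetric] mult_right_mono)
    finally show "(\<Sum>t\<in>I \<times> {..<n}. \<bar>K (j, r) t\<bar>) \<le> e * \<alpha>" .
  qed
  have b_bound: "\<forall>s\<in>S. \<bar>b s\<bar> \<le> e * B"
  proof (clarsimp simp: S_def)
    fix j r assume "j \<in> I" "r < n"
    have "\<bar>b (j, r)\<bar> \<le> (\<Sum>k\<in>I. \<bar>E j k\<bar>) * B"
      unfolding b_def using p_bound \<open>r < n\<close> by (simp add: abs_sum_mult_le)
    also have "\<dots> \<le> e * B"
      using E_rows p_bound \<open>j \<in> I\<close> \<open>r < n\<close> by (intro mult_right_mono) (auto intro: order_trans[OF abs_ge_zero])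
    finally show "\<bar>b (j, r)\<bar> \<le> e * B" .
  qed
  obtain y where y: "\<forall>s\<in>S. y s = affine_step S K b y s"
    using affine_fixpoint_exists[OF \<open>finite S\<close> rows \<open>e * \<alpha> < 1\<close>] by blast
  have "collocation_eqs I n D A p (curry y)"
    using y by (simp add: fixpoint_iff)
  moreover have "\<forall>j\<in>I. \<forall>r<n. Y j r = curry y j r" if "collocation_eqs I n D A p Y" for Y
    using affine_fixpoint_unique[OF \<open>finite S\<close> rows \<open>e * \<alpha> < 1\<close>, of "case_prod Y" b y] that y
    by (simp add: fixpoint_iff S_def)
  moreover have "\<forall>j\<in>I. \<forall>r<n. \<bar>curry y j r\<bar> \<le> e * B / (1 - e * \<alpha>)"
    using affine_fixpoint_bound[OF \<open>finite S\<close> rows \<open>e * \<alpha> < 1\<close> y b_bound] by (simp add: S_def)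
  ultimately show ?thesis by blast
qed

definition endpoint_eq ::
  "'i set \<Rightarrow> nat \<Rightarrow> 'i \<Rightarrow> ('i \<Rightarrow> real) \<Rightarrow> ('i \<Rightarrow> nat \<Rightarrow> nat \<Rightarrow> real) \<Rightarrow> (nat \<Rightarrow> real)
     \<Rightarrow> ('i \<Rightarrow> nat \<Rightarrow> real) \<Rightarrow> bool" where
  "endpoint_eq I n m w A q X \<longleftrightarrow> (\<forall>r<n. X m r - (\<Sum>j\<in>I. w j * (\<Sum>c<n. A j r c * X j c)) = q r)"

lemma collocation_endpoint_system:
  assumes "m \<notin> I" and X_sol: "collocation_eqs I n D A p X"
    and X_unique: "\<forall>Y. collocation_eqs I n D A p Y \<longrightarrow> (\<forall>j\<in>I. \<forall>r<n. Y j r = X j r)"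
  obtains Z where "collocation_eqs I n D A p Z" and "endpoint_eq I n m w A q Z"
    and "\<forall>Y. collocation_eqs I n D A p Y \<and> endpoint_eq I n m w A q Y \<longrightarrow> (\<forall>j\<in>insert m I. \<forall>r<n. Y j r = Z j r)"
    and "\<forall>j\<in>I. Z j = X j" and "\<forall>r. Z m r = q r + (\<Sum>j\<in>I. w j * (\<Sum>c<n. A j r c * X j c))"
proof
  define Z where "Z = X(m := \<lambda>r. q r + (\<Sum>j\<in>I. w j * (\<Sum>c<n. A j r c * X j c)))"
  show Z_I: "\<forall>j\<in>I. Z j = X j" using \<open>m \<notin> I\<close> by (auto simp: Z_def)
  show Z_m: "\<forall>r. Z m r = q r + (\<Sum>j\<in>I. w j * (\<Sum>c<n. A j r c * X j c))" by (simp add: Z_def)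
  show "collocation_eqs I n D A p Z" using X_sol Z_I by (simp add: collocation_eqs_def)
  show "endpoint_eq I n m w A q Z" using Z_I Z_m by (simp add: endpoint_eq_def)
  show "\<forall>Y. collocation_eqs I n D A p Y \<and> endpoint_eq I n m w A q Y \<longrightarrow> (\<forall>j\<in>insert m I. \<forall>r<n. Y j r = Z j r)"
  proof (intro allI impI)
    fix Y assume Y: "collocation_eqs I n D A p Y \<and> endpoint_eq I n m w A q Y"
    then have Y_I: "\<forall>j\<in>I. \<forall>r<n. Y j r = X j r" using X_unique by blast
    then have "\<forall>r<n. Y m r = Z m r"
      using Y Z_m by (simp add: endpoint_eq_def algebra_simps)
    with Y_I Z_I show "\<forall>j\<in>insert m I. \<forall>r<n. Y j r = Z j r" by simp
  qed
qed

lemma abs_endpoint_sum_le: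
  fixes A :: "'i \<Rightarrow> nat \<Rightarrow> nat \<Rightarrow> real" and X :: "'i \<Rightarrow> nat \<Rightarrow> real"
  assumes A_rows: "\<forall>j\<in>I. (\<Sum>c<n. \<bar>A j r c\<bar>) \<le> \<alpha>" and X: "\<forall>j\<in>I. \<forall>c<n. \<bar>X j c\<bar> \<le> M" and "0 \<le> M"
  shows "\<bar>\<Sum>j\<in>I. w j * (\<Sum>c<n. A j r c * X j c)\<bar> \<le> (\<Sum>j\<in>I. \<bar>w j\<bar>) * (\<alpha> * M)"
proof -
  have "\<bar>\<Sum>c<n. A j r c * X j c\<bar> \<le> \<alpha> * M" if "j \<in> I" for j
  proof -
    have "\<bar>\<Sum>c<n. A j r c * X j c\<bar> \<le> (\<Sum>c<n. \<bar>A j r c\<bar>) * M"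
      using X that by (intro abs_sum_mult_le) simp
    also have "\<dots> \<le> \<alpha> * M" using A_rows that \<open>0 \<le> M\<close> by (intro mult_right_mono) auto
    finally show ?thesis .
  qed
  then show ?thesis by (intro abs_sum_mult_le) simp
qed

lemma abs_le_vec_inf_norm: "r < n \<Longrightarrow> \<bar>v r\<bar> \<le> vec_inf_norm n v"
  unfolding vec_inf_norm_def by (intro Max_ge) auto

lemma vec_inf_norm_le: "0 < n \<Longrightarrow> (\<forall>r<n. \<bar>v r\<bar> \<le> C) \<Longrightarrow> vec_inf_norm n v \<le> C"
  unfolding vec_inf_norm_def by (subst Max_le_iff) auto

lemma row_sum_le_mat_inf_norm: "finite I \<Longrightarrow> i \<in> I \<Longrightarrow> (\<Sum>c\<in>I. \<bar>M i c\<bar>) \<le> mat_inf_norm I M"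
  unfolding mat_inf_norm_def by (intro Max_ge) auto

lemma collocation_endpoint_solution:
  fixes D E :: "'i \<Rightarrow> 'i \<Rightarrow> real" and A :: "'i \<Rightarrow> nat \<Rightarrow> nat \<Rightarrow> real"
  assumes "finite I" and "m \<notin> I"
    and inverse: "\<forall>i\<in>I. \<forall>j\<in>I. (\<Sum>k\<in>I. D i k * E k j) = (if i = j then 1 else 0)
                    \<and> (\<Sum>k\<in>I. E i k * D k j) = (if i = j then 1 else 0)"
    and E_rows: "\<forall>i\<in>I. (\<Sum>k\<in>I. \<bar>E i k\<bar>) \<le> e" and "0 \<le> e"
    and A_rows: "\<forall>i\<in>I. \<forall>r<n. (\<Sum>c<n. \<bar>A i r c\<bar>) \<le> \<alpha>" and "0 \<le> \<alpha>" and "e * \<alpha> < 1"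
    and w: "(\<Sum>j\<in>I. \<bar>w j\<bar>) * \<alpha> \<le> 1"
    and p_bound: "\<forall>i\<in>I. \<forall>r<n. \<bar>p i r\<bar> \<le> B" and "0 \<le> B" and "0 < n"
  shows "\<exists>Z. collocation_eqs I n D A p Z \<and> endpoint_eq I n m w A q Z
    \<and> (\<forall>Y. collocation_eqs I n D A p Y \<and> endpoint_eq I n m w A q Y \<longrightarrow> (\<forall>j\<in>insert m I. \<forall>r<n. Y j r = Z j r))
    \<and> (\<forall>j\<in>insert m I. vec_inf_norm n (Z j) \<le> e * B / (1 - e * \<alpha>) + vec_inf_norm n q)"
proof -
  define M where "M = e * B / (1 - e * \<alpha>)"
  obtain X where X_sol: "collocation_eqs I n D A p X"
    and X_unique: "\<forall>Y. collocation_eqs I n D A p Y \<longrightarrow> (\<forall>j\<in>I. \<forall>r<n. Y j r = X j r)"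
    and X_bound: "\<forall>j\<in>I. \<forall>r<n. \<bar>X j r\<bar> \<le> M"
    using collocation_system_solution[OF \<open>finite I\<close> inverse E_rows A_rows \<open>0 \<le> \<alpha>\<close> \<open>e * \<alpha> < 1\<close> p_bound]
    unfolding M_def by blast
  obtain Z where "collocation_eqs I n D A p Z" "endpoint_eq I n m w A q Z"
    and "\<forall>Y. collocation_eqs I n D A p Y \<and> endpoint_eq I n m w A q Y \<longrightarrow> (\<forall>j\<in>insert m I. \<forall>r<n. Y j r = Z j r)"
    and Z_I: "\<forall>j\<in>I. Z j = X j"
    and Z_m: "\<forall>r. Z m r = q r + (\<Sum>j\<in>I. w j * (\<Sum>c<n. A j r c * X j c))"
    by (rule collocation_endpoint_system[OF \<open>m \<notin> I\<close> X_sol X_unique])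
  moreover have "\<forall>j\<in>insert m I. vec_inf_norm n (Z j) \<le> M + vec_inf_norm n q"
  proof (intro ballI vec_inf_norm_le[OF \<open>0 < n\<close>] allI impI)
    fix j r assume j: "j \<in> insert m I" and "r < n"
    have "0 \<le> M" unfolding M_def using \<open>0 \<le> e\<close> \<open>0 \<le> B\<close> \<open>e * \<alpha> < 1\<close> by simp
    have "\<bar>\<Sum>j\<in>I. w j * (\<Sum>c<n. A j r c * X j c)\<bar> \<le> (\<Sum>j\<in>I. \<bar>w j\<bar>) * (\<alpha> * M)"
      using A_rows \<open>r < n\<close> X_bound \<open>0 \<le> M\<close> by (intro abs_endpoint_sum_le) auto
    also have "\<dots> \<le> M"
      using mult_right_mono[OF w \<open>0 \<le> M\<close>] by (simp add: mult.assoc)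
    finally have "\<bar>Z m r\<bar> \<le> \<bar>q r\<bar> + M"
      unfolding Z_m[rule_format] by (meson abs_triangle_ineq add_left_mono order_trans)
    moreover have "\<bar>q r\<bar> \<le> vec_inf_norm n q" using \<open>r < n\<close> by (rule abs_le_vec_inf_norm)
    moreover have "\<bar>Z j r\<bar> \<le> M" if "j \<noteq> m" using that j \<open>r < n\<close> Z_I X_bound by simp
    ultimately show "\<bar>Z j r\<bar> \<le> M + vec_inf_norm n q"
      using abs_ge_zero[of "q r"] by (cases "j = m") auto
  qed
  ultimately show ?thesis unfolding M_def by blast
qed

theorem lemma4p1:
  fixes N n :: nat
    and A :: "nat \<Rightarrow> nat \<Rightarrow> nat \<Rightarrow> real"
    and q :: "nat \<Rightarrow> real"
    and p :: "nat \<Rightarrow> nat \<Rightarrow> real"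
  assumes "N \<ge> 1" and "n \<ge> 1"
    and A_norm: "\<forall>i\<in>{1..N}. mat_inf_norm {..<n} (A i) \<le> 1 / 4"
    and D_inv: "\<exists>E :: nat \<Rightarrow> nat \<Rightarrow> real.
          (\<forall>i\<in>{1..N}. \<forall>j\<in>{1..N}.
              (\<Sum>k\<in>{1..N}. gauss_diff N i k * E k j) = (if i = j then 1 else 0)
            \<and> (\<Sum>k\<in>{1..N}. E i k * gauss_diff N k j) = (if i = j then 1 else 0))
          \<and> mat_inf_norm {1..N} E \<le> 2"
  shows "\<exists>X :: nat \<Rightarrow> nat \<Rightarrow> real.
    (\<forall>i\<in>{1..N}. \<forall>r<n.
        (\<Sum>j\<in>{1..N}. gauss_diff N i j * X j r) - (\<Sum>c<n. A i r c * X i c) = p i r)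
    \<and> (\<forall>r<n. X (N + 1) r - (\<Sum>j\<in>{1..N}. gauss_weight N j * (\<Sum>c<n. A j r c * X j c)) = q r)
    \<and> (\<forall>Y :: nat \<Rightarrow> nat \<Rightarrow> real.
         ((\<forall>i\<in>{1..N}. \<forall>r<n.
             (\<Sum>j\<in>{1..N}. gauss_diff N i j * Y j r) - (\<Sum>c<n. A i r c * Y i c) = p i r)
          \<and> (\<forall>r<n. Y (N + 1) r - (\<Sum>j\<in>{1..N}. gauss_weight N j * (\<Sum>c<n. A j r c * Y j c)) = q r))
         \<longrightarrow> (\<forall>j\<in>{1..N+1}. \<forall>r<n. Y j r = X j r))
    \<and> (\<forall>j\<in>{1..N+1}.
         vec_inf_norm n (X j)
           \<le> 4 * Max ((\<lambda>(i, r). \<bar>p i r\<bar>) ` ({1..N} \<times> {..<n})) + vec_inf_norm n q)"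
proof -
  define P where "P = Max ((\<lambda>(i, r). \<bar>p i r\<bar>) ` ({1..N} \<times> {..<n}))"
  have p_bound: "\<forall>i\<in>{1..N}. \<forall>r<n. \<bar>p i r\<bar> \<le> P"
    unfolding P_def by (auto intro!: Max_ge)
  then have "0 \<le> P" using \<open>N \<ge> 1\<close> \<open>n \<ge> 1\<close> by (meson abs_ge_zero atLeastAtMost_iff order_trans less_le_trans order_refl zero_less_one)
  from D_inv obtain E where inverse: "\<forall>i\<in>{1..N}. \<forall>j\<in>{1..N}.
        (\<Sum>k\<in>{1..N}. gauss_diff N i k * E k j) = (if i = j then 1 else 0)
      \<and> (\<Sum>k\<in>{1..N}. E i k * gauss_diff N k j) = (if i = j then 1 else 0)"
    and E_norm: "mat_inf_norm {1..N} E \<le> 2" by blast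
  have E_rows: "\<forall>i\<in>{1..N}. (\<Sum>k\<in>{1..N}. \<bar>E i k\<bar>) \<le> 2"
    using row_sum_le_mat_inf_norm[of "{1..N}" _ E] E_norm by (blast intro: order_trans)
  have A_rows: "\<forall>i\<in>{1..N}. \<forall>r<n. (\<Sum>c<n. \<bar>A i r c\<bar>) \<le> 1 / 4"
    using A_norm row_sum_le_mat_inf_norm[of "{..<n}"] by (blast intro: order_trans)
  have weights: "(\<Sum>j\<in>{1..N}. \<bar>gauss_weight N j\<bar>) * (1 / 4) \<le> 1"
    using sum_gauss_weight[OF \<open>N \<ge> 1\<close>] gauss_weight_nonneg by simp
  have "2 * P / (1 - 2 * (1 / 4)) = 4 * P" and "insert (N + 1) {1..N} = {1..N + 1}" by auto
  moreover have "\<exists>X. collocation_eqs {1..N} n (gauss_diff N) A p X \<and> endpoint_eq {1..N} n (N + 1) (gauss_weight N) A q X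
    \<and> (\<forall>Y. collocation_eqs {1..N} n (gauss_diff N) A p Y \<and> endpoint_eq {1..N} n (N + 1) (gauss_weight N) A q Y
          \<longrightarrow> (\<forall>j\<in>insert (N + 1) {1..N}. \<forall>r<n. Y j r = X j r))
    \<and> (\<forall>j\<in>insert (N + 1) {1..N}. vec_inf_norm n (X j) \<le> 2 * P / (1 - 2 * (1 / 4)) + vec_inf_norm n q)"
    using \<open>n \<ge> 1\<close>
    by (intro collocation_endpoint_solution[OF _ _ inverse E_rows _ A_rows _ _ weights p_bound \<open>0 \<le> P\<close>]) simp_all
  ultimately show ?thesis unfolding collocation_eqs_def endpoint_eq_def P_def by (simp only:)
qed

end
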